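(* For every finite item set $M$, every $n\ge1$, and every $n$ normalized monotone valuations $v_1,\dots,v_n$ on $M$, there exists a partial allocation $A_0,A_1,\dots,A_n$ such that (i) $v_i(A_i)\ge\mathrm{RMMS}(M,v_i,n)$ for every $i\ge1$, and (ii) it is EFX: for all agents $i\neq j$ (with $i,j\ge1$) and every item $e\in A_j$, $v_i(A_i)\ge v_i(A_j-e)$.
   Context: A valuation is a function $v:2^M\to\mathbb{R}$ that is normalized ($v(\emptyset)=0$) and monotone ($v(S)\le v(T)$ for $S\subseteq T$). A partial allocation is a partition of $M$ into $n+1$ bundles $A_0,A_1,\dots,A_n$, where $A_i$ ($i\ge1$) is given to agent $a_i$ and $A_0$ is unallocated. For $S\subseteq M$ and $e\in S$, $S-e=S\setminus\{e\}$. Residual maximin share: $\mathrm{RMMS}(M,v,n)$ is the largest real $t$ with the following property: for every $0\le k<n$ and every $k$ pairwise disjoint bundles $B_1,\dots,B_k\subseteq M$ with $v(B_j)<t$ for all $j$, the set $M\setminus(B_1\cup\dots\cup B_k)$ can be partitioned into $n-k$ bundles each of value (under $v$) at least $t$. *)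

theory Defs
  imports Complex_Main
begin

definition valuation :: "'a set \<Rightarrow> ('a set \<Rightarrow> real) \<Rightarrow> bool" where
  "valuation M v \<longleftrightarrow> v {} = 0 \<and> (\<forall>S T. S \<subseteq> T \<and> T \<subseteq> M \<longrightarrow> v S \<le> v T)"

definition is_partition :: "'a set \<Rightarrow> nat set \<Rightarrow> (nat \<Rightarrow> 'a set) \<Rightarrow> bool" where
  "is_partition X I P \<longleftrightarrow>
     (\<forall>i\<in>I. \<forall>j\<in>I. i \<noteq> j \<longrightarrow> P i \<inter> P j = {}) \<and> (\<Union>i\<in>I. P i) = X"

definition rmms_prop :: "'a set \<Rightarrow> ('a set \<Rightarrow> real) \<Rightarrow> nat \<Rightarrow> real \<Rightarrow> bool" where
  "rmms_prop M v n t \<longleftrightarrow>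
     (\<forall>k<n. \<forall>B :: nat \<Rightarrow> 'a set.
        (\<forall>j\<in>{1..k}. B j \<subseteq> M \<and> v (B j) < t) \<and>
        (\<forall>i\<in>{1..k}. \<forall>j\<in>{1..k}. i \<noteq> j \<longrightarrow> B i \<inter> B j = {})
        \<longrightarrow> (\<exists>P. is_partition (M - (\<Union>j\<in>{1..k}. B j)) {1..n-k} P \<and>
                  (\<forall>i\<in>{1..n-k}. t \<le> v (P i))))"

definition RMMS :: "'a set \<Rightarrow> ('a set \<Rightarrow> real) \<Rightarrow> nat \<Rightarrow> real" where
  "RMMS M v n = (GREATEST t. rmms_prop M v n t)"

text \<open>Partial allocation: A 0 unallocated, A i given to agent i (1 \<le> i \<le> n).\<close>
definition partial_allocation :: "'a set \<Rightarrow> nat \<Rightarrow> (nat \<Rightarrow> 'a set) \<Rightarrow> bool" where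
  "partial_allocation M n A \<longleftrightarrow> is_partition M {0..n} A"

definition EFX :: "nat \<Rightarrow> (nat \<Rightarrow> 'a set \<Rightarrow> real) \<Rightarrow> (nat \<Rightarrow> 'a set) \<Rightarrow> bool" where
  "EFX n v A \<longleftrightarrow> (\<forall>i\<in>{1..n}. \<forall>j\<in>{1..n}. i \<noteq> j \<longrightarrow>
     (\<forall>e\<in>A j. v i (A j - {e}) \<le> v i (A i)))"

end

(*
  Put t i = RMMS M (v i) n. We grow a partial allocation to a set S of agents that is EFX,
  gives every agent of S at least its threshold, and in which every unassigned agent values
  each assigned bundle below its own threshold. By the latter, any unassigned agent a may use
  the residual maximin property with the assigned bundles removed: the remaining items split
  into |{1..n} - S| bundles that a values at least t a. Shrinking every such bundle to a
  minimal set accepted by some unassigned agent, Hall's theorem yields a nonempty set T of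
  unassigned agents matched to some of these sets, which no other unassigned agent accepts.
  If some assigned agent prefers one of these sets minus one item to its own bundle, it swaps
  its bundle for an inclusion-minimal such set; otherwise the agents of T are added. Both moves
  strictly increase the potential sum of 1 + #{Y. Y \<subseteq> M \<and> v j Y < v j (X j)} over assigned
  agents j, which is bounded, so eventually all agents are assigned.
*)

theory Submission
  imports Defs
begin

lemma hall_condition_Diff_tight:
  assumes "finite J" "\<forall>j\<in>J. finite (A j)" "\<forall>D\<subseteq>J. card D \<le> card (\<Union>(A ` D))"
    and "C \<subseteq> J" "card (\<Union>(A ` C)) = card C"
  shows "\<forall>D\<subseteq>J - C. card D \<le> card (\<Union>((\<lambda>j. A j - \<Union>(A ` C)) ` D))"
proof (intro allI impI)
  fix D assume D: "D \<subseteq> J - C"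
  have DC: "D \<union> C \<subseteq> J" using D assms(4) by blast
  have fin: "finite (\<Union>(A ` (D \<union> C)))"
    using assms(1,2) DC by (meson finite_UN_I finite_subset subsetD)
  have "\<Union>((\<lambda>j. A j - \<Union>(A ` C)) ` D) = \<Union>(A ` (D \<union> C)) - \<Union>(A ` C)" by auto
  then have "card (\<Union>((\<lambda>j. A j - \<Union>(A ` C)) ` D)) = card (\<Union>(A ` (D \<union> C))) - card C"
    using fin assms(5) by (simp add: card_Diff_subset finite_subset)
  moreover have "card (D \<union> C) = card D + card C"
    using D DC assms(1) by (intro card_Un_disjoint) (auto intro: finite_subset)
  moreover have "card (D \<union> C) \<le> card (\<Union>(A ` (D \<union> C)))" using assms(3) DC by blast
  ultimately show "card D \<le> card (\<Union>((\<lambda>j. A j - \<Union>(A ` C)) ` D))" by linarith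
qed

lemma hall_condition_Diff_point:
  assumes "finite J" "\<forall>j\<in>J. finite (A j)"
    and "\<forall>D. D \<noteq> {} \<longrightarrow> D \<subset> J \<longrightarrow> card D < card (\<Union>(A ` D))" "j0 \<in> J"
  shows "\<forall>D\<subseteq>J - {j0}. card D \<le> card (\<Union>((\<lambda>j. A j - {x}) ` D))"
proof (intro allI impI)
  fix D assume D: "D \<subseteq> J - {j0}"
  show "card D \<le> card (\<Union>((\<lambda>j. A j - {x}) ` D))"
  proof (cases "D = {}")
    case False
    have "D \<subset> J" using D assms(4) by auto
    then have "card D < card (\<Union>(A ` D))" using assms(3) False by blast
    moreover have "\<Union>((\<lambda>j. A j - {x}) ` D) = \<Union>(A ` D) - {x}" by auto
    ultimately show ?thesis using diff_card_le_card_Diff[of "{x}" "\<Union>(A ` D)"] by simp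
  qed simp
qed

text \<open>Halmos--Vaughan induction: a critical proper subfamily C (with as many elements as
  sets) is matched on its own, and J - C after deleting those elements; without a critical
  subfamily, Hall's condition survives deleting any single element from all sets.\<close>
theorem hall_marriage:
  assumes "finite J" "\<forall>j\<in>J. finite (A j)" "\<forall>D\<subseteq>J. card D \<le> card (\<Union>(A ` D))"
  shows "\<exists>f. inj_on f J \<and> (\<forall>j\<in>J. f j \<in> A j)"
  using assms
proof (induction "card J" arbitrary: J A rule: less_induct)
  case less
  show ?case
  proof (cases "\<exists>C. C \<noteq> {} \<and> C \<subset> J \<and> card (\<Union>(A ` C)) = card C")
    case True
    then obtain C where C: "C \<noteq> {}" "C \<subset> J" "card (\<Union>(A ` C)) = card C" by blast
    define A' where "A' = (\<lambda>j. A j - \<Union>(A ` C))"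
    have "card C < card J" "card (J - C) < card J"
      using C less.prems(1) by (auto intro: psubset_card_mono)
    moreover have "finite C" "C \<subseteq> J" using C(2) less.prems(1) finite_subset by auto
    ultimately obtain f1 f2 where f1: "inj_on f1 C" "\<forall>j\<in>C. f1 j \<in> A j"
      and f2: "inj_on f2 (J - C)" "\<forall>j\<in>J - C. f2 j \<in> A' j"
      using less.hyps[of C A] less.hyps[of "J - C" A'] less.prems
        hall_condition_Diff_tight[OF less.prems _ C(3), folded A'_def]
      by (simp add: A'_def subset_iff) blast
    define f where "f = (\<lambda>j. if j \<in> C then f1 j else f2 j)"
    have "inj_on f C" using f1(1) by (simp add: f_def inj_on_def)
    moreover have "inj_on f (J - C)" using f2(1) by (simp add: f_def inj_on_def)
    moreover have "f ` C \<inter> f ` (J - C) = {}" using f1(2) f2(2) by (auto simp: f_def A'_def)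
    moreover have "C - (J - C) = C" "J - C - C = J - C" "C \<union> (J - C) = J" using C(2) by blast+
    ultimately have "inj_on f J" using inj_on_Un[of f C "J - C"] by simp
    moreover have "\<forall>j\<in>J. f j \<in> A j" using f1 f2 by (auto simp: f_def A'_def)
    ultimately show ?thesis by metis
  next
    case False
    then have strict: "\<forall>D. D \<noteq> {} \<longrightarrow> D \<subset> J \<longrightarrow> card D < card (\<Union>(A ` D))"
      using less.prems(3) by (metis le_neq_implies_less psubset_imp_subset)
    show ?thesis
    proof (cases "J = {}")
      case False
      then obtain j0 where j0: "j0 \<in> J" by blast
      then have "1 \<le> card (A j0)" using less.prems(3)[rule_format, of "{j0}"] by simp
      then obtain x where x: "x \<in> A j0" by fastforce
      have "card (J - {j0}) < card J" using j0 less.prems(1) by (meson card_Diff1_less)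
      then obtain f where f: "inj_on f (J - {j0})" "\<forall>j\<in>J - {j0}. f j \<in> A j - {x}"
        using less.hyps[of "J - {j0}" "\<lambda>j. A j - {x}"] less.prems(1,2)
          hall_condition_Diff_point[OF less.prems(1,2) strict j0] by simp blast
      have "inj_on (f(j0 := x)) (J - {j0})" using f(1) by (auto simp: inj_on_def)
      moreover have "x \<notin> (f(j0 := x)) ` (J - {j0})" using f(2) by auto
      ultimately have "inj_on (f(j0 := x)) J"
        using inj_on_insert[of "f(j0 := x)" j0 "J - {j0}"] insert_Diff[OF j0] by simp
      then show ?thesis using f(2) x by (metis DiffE DiffI fun_upd_apply singletonD)
    qed simp
  qed
qed

lemma exists_critical_subfamily:
  assumes "finite J" "\<forall>j\<in>J. finite (A j)" "\<forall>j\<in>J. A j \<noteq> {}"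
    and "J \<noteq> {}" "card (\<Union>(A ` J)) \<le> card J"
  shows "\<exists>C\<subseteq>J. C \<noteq> {} \<and> card (\<Union>(A ` C)) = card C \<and>
           (\<forall>D\<subseteq>C. card D \<le> card (\<Union>(A ` D)))"
proof -
  let ?P = "\<lambda>C. C \<subseteq> J \<and> C \<noteq> {} \<and> card (\<Union>(A ` C)) \<le> card C"
  obtain C where C: "?P C" and min: "\<And>D. ?P D \<Longrightarrow> card C \<le> card D"
    using ex_has_least_nat[of ?P J card] assms(4,5) by blast
  have finC: "finite C" using C assms(1) finite_subset by blast
  have finN: "finite (\<Union>(A ` C))" using C assms(2) finC by blast
  have proper: "card D < card (\<Union>(A ` D))" if "D \<subset> C" "D \<noteq> {}" for D
  proof (rule ccontr)
    assume "\<not> ?thesis"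
    then have "card C \<le> card D" using that C by (intro min) auto
    then show False using psubset_card_mono[OF finC that(1)] by simp
  qed
  have tight: "card C \<le> card (\<Union>(A ` C))"
  proof (rule ccontr)
    assume less: "\<not> ?thesis"
    obtain x where x: "x \<in> C" using C by blast
    show False
    proof (cases "C - {x} = {}")
      case True
      then have "C = {x}" using x by blast
      then show False using less assms(2,3) C by (auto simp: Suc_le_eq card_gt_0_iff)
    next
      case False
      have "card (C - {x}) < card (\<Union>(A ` (C - {x})))" using proper[OF _ False] x by blast
      moreover have "card (\<Union>(A ` (C - {x}))) \<le> card (\<Union>(A ` C))"
        using finN by (intro card_mono) auto
      ultimately show False using less x finC by auto
    qed
  qed
  have "card D \<le> card (\<Union>(A ` D))" if "D \<subseteq> C" for D
    using proper[of D] tight that by (cases "D = C"; cases "D = {}") (auto simp: psubset_eq)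
  with C tight show ?thesis by (intro exI[of _ C]) auto
qed

lemma critical_subfamily_matching:
  assumes "finite J" "\<forall>j\<in>J. finite (A j)" "\<forall>j\<in>J. A j \<noteq> {}"
    and "J \<noteq> {}" "card (\<Union>(A ` J)) \<le> card J"
  shows "\<exists>C\<subseteq>J. C \<noteq> {} \<and> (\<exists>g. bij_betw g (\<Union>(A ` C)) C \<and> (\<forall>i\<in>\<Union>(A ` C). i \<in> A (g i)))"
proof -
  obtain C where C: "C \<subseteq> J" "C \<noteq> {}" "card (\<Union>(A ` C)) = card C"
    and hall: "\<forall>D\<subseteq>C. card D \<le> card (\<Union>(A ` D))"
    using exists_critical_subfamily[OF assms] by blast
  have finC: "finite C" using C(1) assms(1) finite_subset by blast
  have finN: "finite (\<Union>(A ` C))" using C(1) assms(2) finC by blast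
  obtain f where f: "inj_on f C" "\<forall>j\<in>C. f j \<in> A j"
    using hall_marriage[OF finC _ hall] assms(2) C(1) by blast
  have "f ` C \<subseteq> \<Union>(A ` C)" using f(2) by blast
  moreover have "card (f ` C) = card (\<Union>(A ` C))" using card_image[OF f(1)] C(3) by simp
  ultimately have "bij_betw f C (\<Union>(A ` C))"
    using f(1) finN by (simp add: bij_betw_def card_subset_eq)
  then have "bij_betw (the_inv_into C f) (\<Union>(A ` C)) C" by (rule bij_betw_the_inv_into)
  moreover have "i \<in> A (the_inv_into C f i)" if "i \<in> \<Union>(A ` C)" for i
    using that \<open>bij_betw f C (\<Union>(A ` C))\<close> f(2)
    by (metis bij_betw_def f_the_inv_into_f the_inv_into_into order_refl)
  ultimately show ?thesis using C by blast
qed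

lemma valuation_mono: "valuation M w \<Longrightarrow> S \<subseteq> T \<Longrightarrow> T \<subseteq> M \<Longrightarrow> w S \<le> w T"
  unfolding valuation_def by blast

lemma valuation_nonneg: "valuation M w \<Longrightarrow> S \<subseteq> M \<Longrightarrow> 0 \<le> w S"
  unfolding valuation_def by (metis empty_subsetI)

lemma rmms_prop_zero:
  assumes "valuation M w" "n \<ge> 1"
  shows "rmms_prop M w n 0"
  unfolding rmms_prop_def
proof (intro allI impI)
  fix k and B :: "nat \<Rightarrow> 'a set"
  assume "k < n" and B: "(\<forall>j\<in>{1..k}. B j \<subseteq> M \<and> w (B j) < 0) \<and>
    (\<forall>i\<in>{1..k}. \<forall>j\<in>{1..k}. i \<noteq> j \<longrightarrow> B i \<inter> B j = {})"
  have "k = 0"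
  proof (rule ccontr)
    assume "k \<noteq> 0"
    then have "B 1 \<subseteq> M" "w (B 1) < 0" using B by auto
    then show False using valuation_nonneg[OF assms(1), of "B 1"] by linarith
  qed
  then have "is_partition (M - (\<Union>j\<in>{1..k}. B j)) {1..n-k} (\<lambda>i. if i = 1 then M else {})"
    using assms(2) by (auto simp: is_partition_def)
  moreover have "\<forall>i\<in>{1..n-k}. 0 \<le> w (if i = 1 then M else {})"
    using valuation_nonneg[OF assms(1)] by auto
  ultimately show "\<exists>P. is_partition (M - (\<Union>j\<in>{1..k}. B j)) {1..n-k} P \<and>
      (\<forall>i\<in>{1..n-k}. 0 \<le> w (P i))" by blast
qed

lemma rmms_prop_le_value:
  assumes "valuation M w" "n \<ge> 1" "rmms_prop M w n t"
  shows "t \<le> w M"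
proof -
  obtain P where P: "is_partition M {1..n} P" "\<forall>i\<in>{1..n}. t \<le> w (P i)"
    using assms(2,3) unfolding rmms_prop_def by (elim allE[of _ 0]) auto
  then have "t \<le> w (P 1)" and P1: "P 1 \<subseteq> M" using assms(2) by (auto simp: is_partition_def)
  then show ?thesis using valuation_mono[OF assms(1) P1 subset_refl] by linarith
qed

lemma rmms_prop_raise:
  assumes "rmms_prop M w n t" "\<forall>S\<subseteq>M. w S < t' \<longrightarrow> w S < t" "t \<le> t'"
  shows "rmms_prop M w n t'"
  unfolding rmms_prop_def
proof (intro allI impI)
  fix k and B :: "nat \<Rightarrow> 'a set"
  assume k: "k < n" and B: "(\<forall>j\<in>{1..k}. B j \<subseteq> M \<and> w (B j) < t') \<and>
    (\<forall>i\<in>{1..k}. \<forall>j\<in>{1..k}. i \<noteq> j \<longrightarrow> B i \<inter> B j = {})"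
  have "B j \<subseteq> M \<and> w (B j) < t" if "j \<in> {1..k}" for j
  proof -
    have "B j \<subseteq> M" "w (B j) < t'" using B that by auto
    then show ?thesis using assms(2) by simp
  qed
  then obtain P where P: "is_partition (M - (\<Union>j\<in>{1..k}. B j)) {1..n-k} P"
      "\<forall>i\<in>{1..n-k}. t \<le> w (P i)"
    using assms(1)[unfolded rmms_prop_def, rule_format, OF k conjI[OF _ conjunct2[OF B]]] by blast
  have "t' \<le> w (P i)" if "i \<in> {1..n-k}" for i
  proof (rule ccontr)
    assume "\<not> ?thesis"
    moreover have "P i \<subseteq> M" using P(1) that by (auto simp: is_partition_def)
    ultimately have "w (P i) < t" using assms(2) by simp
    then show False using P(2) that by fastforce
  qed
  then show "\<exists>P. is_partition (M - (\<Union>j\<in>{1..k}. B j)) {1..n-k} P \<and>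
      (\<forall>i\<in>{1..n-k}. t' \<le> w (P i))" using P(1) by blast
qed

lemma rmms_prop_round_up:
  assumes "finite M" "valuation M w" "n \<ge> 1" "rmms_prop M w n t"
  defines "t' \<equiv> Min {x \<in> w ` Pow M. t \<le> x}"
  shows "rmms_prop M w n t'" "t' \<in> w ` Pow M" "t \<le> t'"
proof -
  have fin: "finite {x \<in> w ` Pow M. t \<le> x}" using assms(1) by simp
  have "w M \<in> {x \<in> w ` Pow M. t \<le> x}" using rmms_prop_le_value[OF assms(2-4)] by blast
  then have t': "t' \<in> {x \<in> w ` Pow M. t \<le> x}" unfolding t'_def using fin by (intro Min_in) auto
  then show "t' \<in> w ` Pow M" "t \<le> t'" by auto
  have "w S < t" if "S \<subseteq> M" "w S < t'" for S
  proof (rule ccontr)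
    assume "\<not> w S < t"
    then have "w S \<in> {x \<in> w ` Pow M. t \<le> x}" using that(1) by auto
    then have "t' \<le> w S" unfolding t'_def by (rule Min_le[OF fin])
    then show False using that(2) by linarith
  qed
  then show "rmms_prop M w n t'" using rmms_prop_raise[OF assms(4) _ \<open>t \<le> t'\<close>] by blast
qed

text \<open>Thresholds may be rounded up to bundle values, so the greatest threshold exists (and
  RMMS is not a junk value of GREATEST).\<close>
lemma rmms_prop_RMMS:
  assumes "finite M" "valuation M w" "n \<ge> 1"
  shows "rmms_prop M w n (RMMS M w n)"
proof -
  let ?S = "{x \<in> w ` Pow M. rmms_prop M w n x}"
  have fin: "finite ?S" using assms(1) by simp
  have "?S \<noteq> {}" using rmms_prop_round_up[OF assms rmms_prop_zero[OF assms(2,3)]] by blast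
  then have max: "Max ?S \<in> ?S" using fin by (intro Max_in)
  have "y \<le> Max ?S" if "rmms_prop M w n y" for y
  proof -
    let ?y = "Min {x \<in> w ` Pow M. y \<le> x}"
    have "?y \<in> ?S" using rmms_prop_round_up(1,2)[OF assms that] by blast
    then have "?y \<le> Max ?S" by (rule Max_ge[OF fin])
    then show ?thesis using rmms_prop_round_up(3)[OF assms that] by linarith
  qed
  then have "RMMS M w n = Max ?S" unfolding RMMS_def using max by (intro Greatest_equality) auto
  then show ?thesis using max by simp
qed

lemma rmms_prop_residual_partition:
  assumes "rmms_prop M w n t" "finite S" "card S < n"
    and "\<forall>j\<in>S. X j \<subseteq> M \<and> w (X j) < t" "\<forall>j\<in>S. \<forall>k\<in>S. j \<noteq> k \<longrightarrow> X j \<inter> X k = {}"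
  shows "\<exists>P. is_partition (M - \<Union>(X ` S)) {1..n - card S} P \<and>
             (\<forall>i\<in>{1..n - card S}. t \<le> w (P i))"
proof -
  obtain h where h: "bij_betw h {1..card S} S" using ex_bij_betw_nat_finite_1[OF assms(2)] by blast
  have hS: "h j \<in> S" if "j \<in> {1..card S}" for j using bij_betw_apply[OF h that] .
  have B1: "\<forall>j\<in>{1..card S}. X (h j) \<subseteq> M \<and> w (X (h j)) < t" using assms(4) hS by blast
  have B2: "\<forall>i\<in>{1..card S}. \<forall>j\<in>{1..card S}. i \<noteq> j \<longrightarrow> X (h i) \<inter> X (h j) = {}"
    using assms(5) hS bij_betw_imp_inj_on[OF h] by (metis inj_on_contraD)
  have "(\<Union>j\<in>{1..card S}. X (h j)) = \<Union>(X ` S)"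
    using h by (metis bij_betw_imp_surj_on image_image)
  then show ?thesis
    using assms(1)[unfolded rmms_prop_def, rule_format, OF assms(3) conjI[OF B1 B2]] by simp
qed

lemma exists_minimal_subset:
  assumes "finite P" "\<Phi> P"
  shows "\<exists>Q\<subseteq>P. \<Phi> Q \<and> (\<forall>e\<in>Q. \<not> \<Phi> (Q - {e}))"
proof -
  obtain Q where Q: "Q \<subseteq> P" "\<Phi> Q" and min: "\<And>Q'. Q' \<subseteq> P \<and> \<Phi> Q' \<Longrightarrow> card Q \<le> card Q'"
    using ex_has_least_nat[of "\<lambda>Q. Q \<subseteq> P \<and> \<Phi> Q" P card] assms(2) by blast
  have "\<not> \<Phi> (Q - {e})" if "e \<in> Q" for e
  proof
    assume "\<Phi> (Q - {e})"
    then have "card Q \<le> card (Q - {e})" using Q(1) by (intro min) auto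
    moreover have "card (Q - {e}) < card Q"
      using card_Diff1_less[OF finite_subset[OF Q(1) assms(1)] that] .
    ultimately show False by simp
  qed
  then show ?thesis using Q by blast
qed

lemma exists_minimal_accepted_subsets:
  fixes v :: "nat \<Rightarrow> 'a set \<Rightarrow> real"
  assumes "\<forall>j\<in>J. finite (P j)" "\<forall>j\<in>J. \<exists>i\<in>U. t i \<le> v i (P j)"
  obtains Q where "\<forall>j\<in>J. Q j \<subseteq> P j" "\<forall>j\<in>J. \<exists>i\<in>U. t i \<le> v i (Q j)"
    "\<forall>j\<in>J. \<forall>e\<in>Q j. \<forall>i\<in>U. v i (Q j - {e}) < t i"
proof -
  have "\<exists>Q. Q \<subseteq> P j \<and> (\<exists>i\<in>U. t i \<le> v i Q) \<and> (\<forall>e\<in>Q. \<forall>i\<in>U. v i (Q - {e}) < t i)"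
    if "j \<in> J" for j
  proof -
    have "finite (P j)" "\<exists>i\<in>U. t i \<le> v i (P j)" using assms that by blast+
    then obtain Q where "Q \<subseteq> P j" "\<exists>i\<in>U. t i \<le> v i Q"
        "\<forall>e\<in>Q. \<not> (\<exists>i\<in>U. t i \<le> v i (Q - {e}))"
      using exists_minimal_subset[of "P j" "\<lambda>Q. \<exists>i\<in>U. t i \<le> v i Q"] by blast
    then show ?thesis by (auto simp: not_le)
  qed
  then have "\<exists>Q. \<forall>j\<in>J. Q j \<subseteq> P j \<and> (\<exists>i\<in>U. t i \<le> v i (Q j)) \<and>
      (\<forall>e\<in>Q j. \<forall>i\<in>U. v i (Q j - {e}) < t i)"
    by (rule bchoice[OF ballI])
  then obtain Q where Q: "\<forall>j\<in>J. Q j \<subseteq> P j \<and> (\<exists>i\<in>U. t i \<le> v i (Q j)) \<and>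
      (\<forall>e\<in>Q j. \<forall>i\<in>U. v i (Q j - {e}) < t i)" ..
  show thesis by (rule that[of Q]) (use Q in simp_all)
qed

text \<open>Shrink every bundle to a minimal set still accepted by some agent of U; a Hall-critical
  family of the shrunk bundles is then matched perfectly to the agents accepting its members.\<close>
lemma exists_matched_minimal_bundles:
  fixes v :: "nat \<Rightarrow> 'a set \<Rightarrow> real"
  assumes "finite R" "finite U" "U \<noteq> {}" "is_partition R {1..card U} P"
    and "\<forall>j\<in>{1..card U}. \<exists>i\<in>U. t i \<le> v i (P j)"
  obtains T Y where "T \<subseteq> U" "T \<noteq> {}" "\<forall>i\<in>T. Y i \<subseteq> R"
    "\<forall>i\<in>T. \<forall>i'\<in>T. i \<noteq> i' \<longrightarrow> Y i \<inter> Y i' = {}"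
    "\<forall>i\<in>T. t i \<le> v i (Y i)"
    "\<forall>i'\<in>U - T. \<forall>i\<in>T. v i' (Y i) < t i'"
    "\<forall>i'\<in>U. \<forall>i\<in>T. \<forall>e\<in>Y i. v i' (Y i - {e}) < t i'"
proof -
  let ?J = "{1..card U}"
  have PR: "\<forall>j\<in>?J. P j \<subseteq> R" using assms(4) by (auto simp: is_partition_def)
  then have "\<forall>j\<in>?J. finite (P j)" using assms(1) finite_subset by blast
  then obtain Q where QP: "\<forall>j\<in>?J. Q j \<subseteq> P j"
    and Q_accepted: "\<forall>j\<in>?J. \<exists>i\<in>U. t i \<le> v i (Q j)"
    and Q_minimal: "\<forall>j\<in>?J. \<forall>e\<in>Q j. \<forall>i\<in>U. v i (Q j - {e}) < t i"
    using exists_minimal_accepted_subsets[OF _ assms(5)] by blast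
  define A where "A j = {i\<in>U. t i \<le> v i (Q j)}" for j
  have "card (\<Union>(A ` ?J)) \<le> card ?J"
    using card_mono[OF assms(2), of "\<Union>(A ` ?J)"] by (auto simp: A_def)
  moreover have "\<forall>j\<in>?J. A j \<noteq> {}" "\<forall>j\<in>?J. finite (A j)"
    using Q_accepted assms(2) by (auto simp: A_def)
  moreover have "?J \<noteq> {}" using assms(2,3) by (simp add: Suc_le_eq card_gt_0_iff)
  ultimately obtain C g where C: "C \<subseteq> ?J" "C \<noteq> {}" and g: "bij_betw g (\<Union>(A ` C)) C"
    and g_accepted: "\<forall>i\<in>\<Union>(A ` C). i \<in> A (g i)"
    using critical_subfamily_matching[OF finite_atLeastAtMost, of 1 "card U" A] by blast
  define T where "T = \<Union>(A ` C)"
  have gT: "g i \<in> C" if "i \<in> T" for i using bij_betw_apply[OF g] that by (simp add: T_def)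
  have "T \<subseteq> U" "T \<noteq> {}" using C Q_accepted by (auto simp: T_def A_def)
  moreover have "\<forall>i\<in>T. Q (g i) \<subseteq> R" using gT C(1) QP PR by blast
  moreover have "\<forall>i\<in>T. \<forall>i'\<in>T. i \<noteq> i' \<longrightarrow> Q (g i) \<inter> Q (g i') = {}"
  proof (intro ballI impI)
    fix i i' assume i: "i \<in> T" "i' \<in> T" "i \<noteq> i'"
    then have "g i \<noteq> g i'" using bij_betw_imp_inj_on[OF g] by (auto simp: T_def dest: inj_onD)
    moreover have "g i \<in> ?J" "g i' \<in> ?J" using gT i C(1) by blast+
    ultimately have "P (g i) \<inter> P (g i') = {}" using assms(4) unfolding is_partition_def by blast
    then show "Q (g i) \<inter> Q (g i') = {}" using QP \<open>g i \<in> ?J\<close> \<open>g i' \<in> ?J\<close> by blast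
  qed
  moreover have "\<forall>i\<in>T. t i \<le> v i (Q (g i))" using g_accepted by (simp add: T_def A_def)
  moreover have "\<forall>i'\<in>U - T. \<forall>i\<in>T. v i' (Q (g i)) < t i'"
  proof (intro ballI)
    fix i' i assume "i' \<in> U - T" "i \<in> T"
    then have "i' \<notin> A (g i)" using gT unfolding T_def by blast
    then show "v i' (Q (g i)) < t i'" using \<open>i' \<in> U - T\<close> by (simp add: A_def)
  qed
  moreover have "\<forall>i'\<in>U. \<forall>i\<in>T. \<forall>e\<in>Q (g i). v i' (Q (g i) - {e}) < t i'"
    using gT C(1) Q_minimal by blast
  ultimately show thesis by (rule that)
qed

text \<open>The last clause lets an unassigned agent apply rmms_prop with the assigned bundles as B.\<close>
definition efx_state ::
  "'a set \<Rightarrow> nat \<Rightarrow> (nat \<Rightarrow> 'a set \<Rightarrow> real) \<Rightarrow> (nat \<Rightarrow> real) \<Rightarrow> nat set \<Rightarrow> (nat \<Rightarrow> 'a set) \<Rightarrow> bool"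
where
  "efx_state M n v t S X \<longleftrightarrow> S \<subseteq> {1..n} \<and> (\<forall>j\<in>S. X j \<subseteq> M) \<and>
     (\<forall>j\<in>S. \<forall>k\<in>S. j \<noteq> k \<longrightarrow> X j \<inter> X k = {}) \<and>
     (\<forall>j\<in>S. t j \<le> v j (X j)) \<and>
     (\<forall>j\<in>S. \<forall>k\<in>S. j \<noteq> k \<longrightarrow> (\<forall>e\<in>X k. v j (X k - {e}) \<le> v j (X j))) \<and>
     (\<forall>i\<in>{1..n} - S. \<forall>k\<in>S. v i (X k) < t i)"

definition potential :: "'a set \<Rightarrow> (nat \<Rightarrow> 'a set \<Rightarrow> real) \<Rightarrow> nat set \<Rightarrow> (nat \<Rightarrow> 'a set) \<Rightarrow> nat"
  where "potential M v S X = (\<Sum>j\<in>S. Suc (card {Y \<in> Pow M. v j Y < v j (X j)}))"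

lemma efx_stateD:
  assumes "efx_state M n v t S X"
  shows "S \<subseteq> {1..n}" "\<forall>j\<in>S. X j \<subseteq> M"
    "\<forall>j\<in>S. \<forall>k\<in>S. j \<noteq> k \<longrightarrow> X j \<inter> X k = {}"
    "\<forall>j\<in>S. t j \<le> v j (X j)"
    "\<forall>j\<in>S. \<forall>k\<in>S. j \<noteq> k \<longrightarrow> (\<forall>e\<in>X k. v j (X k - {e}) \<le> v j (X j))"
    "\<forall>i\<in>{1..n} - S. \<forall>k\<in>S. v i (X k) < t i"
  using assms unfolding efx_state_def by blast+

lemma efx_state_empty: "efx_state M n v t {} X"
  by (simp add: efx_state_def)

lemma potential_le:
  assumes "finite M" "S \<subseteq> {1..n}"
  shows "potential M v S X \<le> n * Suc (card (Pow M))"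
proof -
  have "Suc (card {Y \<in> Pow M. v j Y < v j (X j)}) \<le> Suc (card (Pow M))" for j
    using assms(1) by (intro Suc_le_mono[THEN iffD2] card_mono) auto
  then have "potential M v S X \<le> of_nat (card S) * Suc (card (Pow M))"
    unfolding potential_def by (rule sum_bounded_above)
  also have "\<dots> \<le> n * Suc (card (Pow M))"
    using card_mono[OF finite_atLeastAtMost assms(2)] by (intro mult_le_mono1) simp
  finally show ?thesis .
qed

lemma potential_fun_upd_less:
  assumes "finite M" "finite S" "j \<in> S" "X j \<subseteq> M" "v j (X j) < v j Z"
  shows "potential M v S X < potential M v S (X(j := Z))"
  unfolding potential_def
proof (rule sum_strict_mono_ex1[OF assms(2)])
  have sub: "{Y \<in> Pow M. v j Y < v j (X j)} \<subseteq> {Y \<in> Pow M. v j Y < v j Z}"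
    using assms(5) by auto
  show "\<forall>k\<in>S. Suc (card {Y \<in> Pow M. v k Y < v k (X k)})
      \<le> Suc (card {Y \<in> Pow M. v k Y < v k ((X(j := Z)) k)})"
  proof
    fix k assume "k \<in> S"
    show "Suc (card {Y \<in> Pow M. v k Y < v k (X k)})
      \<le> Suc (card {Y \<in> Pow M. v k Y < v k ((X(j := Z)) k)})"
    proof (cases "k = j")
      case True
      then show ?thesis using card_mono[OF _ sub] assms(1) by simp
    qed simp
  qed
  have "X j \<in> {Y \<in> Pow M. v j Y < v j Z} - {Y \<in> Pow M. v j Y < v j (X j)}"
    using assms(4,5) by simp
  then have "card {Y \<in> Pow M. v j Y < v j (X j)} < card {Y \<in> Pow M. v j Y < v j Z}"
    using sub assms(1) by (intro psubset_card_mono) auto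
  then show "\<exists>k\<in>S. Suc (card {Y \<in> Pow M. v k Y < v k (X k)})
      < Suc (card {Y \<in> Pow M. v k Y < v k ((X(j := Z)) k)})"
    using assms(3) by (intro bexI[of _ j]) auto
qed

lemma potential_union_less:
  assumes "finite S" "finite T" "T \<noteq> {}" "S \<inter> T = {}" "\<forall>j\<in>S. X' j = X j"
  shows "potential M v S X < potential M v (S \<union> T) X'"
proof -
  have "potential M v (S \<union> T) X' = potential M v S X' + potential M v T X'"
    unfolding potential_def by (rule sum.union_disjoint[OF assms(1,2,4)])
  moreover have "potential M v S X' = potential M v S X"
    unfolding potential_def using assms(5) by simp
  moreover have "0 < potential M v T X'"
    unfolding potential_def using assms(2,3) by (simp add: sum_pos)
  ultimately show ?thesis by simp
qed
lemma efx_state_replace_bundle: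
  assumes state: "efx_state M n v t S X" and "j0 \<in> S" and Z: "Z \<subseteq> M - \<Union>(X ` S)"
    and better: "v j0 (X j0) < v j0 Z"
    and no_envy: "\<forall>j\<in>S. \<forall>e\<in>Z. v j (Z - {e}) \<le> v j (X j)"
    and unwanted: "\<forall>i\<in>{1..n} - S. v i Z < t i"
  shows "efx_state M n v t S (X(j0 := Z))"
  unfolding efx_state_def
proof (intro conjI ballI impI)
  note old = state[unfolded efx_state_def]
  show "S \<subseteq> {1..n}" using old by blast
  fix j k assume j: "j \<in> S"
  show "(X(j0 := Z)) j \<subseteq> M" using old Z j by auto
  show "t j \<le> v j ((X(j0 := Z)) j)"
    using old better j by (cases "j = j0") auto
  assume k: "k \<in> S" and "j \<noteq> k"
  show "(X(j0 := Z)) j \<inter> (X(j0 := Z)) k = {}"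
    using old Z j k \<open>j \<noteq> k\<close> by (cases "j = j0"; cases "k = j0") auto
  fix e assume e: "e \<in> (X(j0 := Z)) k"
  show "v j ((X(j0 := Z)) k - {e}) \<le> v j ((X(j0 := Z)) j)"
  proof (cases "k = j0")
    case True
    then show ?thesis using no_envy j e \<open>j \<noteq> k\<close> by simp
  next
    case False
    then have "v j (X k - {e}) \<le> v j (X j)" using old j k e \<open>j \<noteq> k\<close> by simp
    then show ?thesis using False better by (cases "j = j0") simp_all
  qed
next
  fix i k assume "i \<in> {1..n} - S" "k \<in> S"
  then show "v i ((X(j0 := Z)) k) < t i" using state unwanted unfolding efx_state_def by (cases "k = j0") simp_all
qed
lemma efx_state_add_agents:
  assumes state: "efx_state M n v t S X" and T: "T \<subseteq> {1..n} - S"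
    and Y: "\<forall>i\<in>T. Y i \<subseteq> M - \<Union>(X ` S)" "\<forall>i\<in>T. \<forall>k\<in>T. i \<noteq> k \<longrightarrow> Y i \<inter> Y k = {}"
    and accepted: "\<forall>i\<in>T. t i \<le> v i (Y i)"
    and unwanted: "\<forall>i\<in>{1..n} - S - T. \<forall>k\<in>T. v i (Y k) < t i"
    and minimal: "\<forall>i\<in>T. \<forall>k\<in>T. \<forall>e\<in>Y k. v i (Y k - {e}) < t i"
    and no_envy: "\<forall>j\<in>S. \<forall>k\<in>T. \<forall>e\<in>Y k. v j (Y k - {e}) \<le> v j (X j)"
    and val: "\<forall>i\<in>T. valuation M (v i)"
  shows "efx_state M n v t (S \<union> T) (\<lambda>i. if i \<in> T then Y i else X i)"
  unfolding efx_state_def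
proof (intro conjI ballI impI)
  note old = efx_stateD[OF state]
  show "S \<union> T \<subseteq> {1..n}" using old(1) T by blast
  fix j k assume j: "j \<in> S \<union> T"
  show "(if j \<in> T then Y j else X j) \<subseteq> M" using old(2) Y(1) j by auto
  show "t j \<le> v j (if j \<in> T then Y j else X j)" using old(4) accepted j by auto
  assume k: "k \<in> S \<union> T" and "j \<noteq> k"
  show "(if j \<in> T then Y j else X j) \<inter> (if k \<in> T then Y k else X k) = {}"
  proof (cases "j \<in> T"; cases "k \<in> T")
    assume "j \<in> T" "k \<in> T"
    then show ?thesis using Y(2) \<open>j \<noteq> k\<close> by simp
  next
    assume "j \<notin> T" "k \<notin> T"
    then show ?thesis using old(3) j k \<open>j \<noteq> k\<close> by simp
  next
    assume "j \<in> T" "k \<notin> T"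
    then show ?thesis using Y(1) k by auto
  next
    assume "j \<notin> T" "k \<in> T"
    then show ?thesis using Y(1) j by auto
  qed
  fix e assume e: "e \<in> (if k \<in> T then Y k else X k)"
  show "v j ((if k \<in> T then Y k else X k) - {e}) \<le> v j (if j \<in> T then Y j else X j)"
  proof (cases "j \<in> T")
    case jT: True
    have "v j ((if k \<in> T then Y k else X k) - {e}) < t j"
    proof (cases "k \<in> T")
      case True
      then show ?thesis using minimal jT e by simp
    next
      case False
      then have "k \<in> S" using k by blast
      then have "v j (X k - {e}) \<le> v j (X k)"
        using val jT old(2) valuation_mono[of M "v j" "X k - {e}" "X k"] by blast
      moreover have "v j (X k) < t j" using old(6) \<open>k \<in> S\<close> jT T by blast
      ultimately show ?thesis using False by simp
    qed
    moreover have "t j \<le> v j (Y j)" using accepted jT by blast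
    ultimately show ?thesis using jT by simp
  next
    case jS: False
    then have "j \<in> S" using j by blast
    show ?thesis
    proof (cases "k \<in> T")
      case True
      then show ?thesis using no_envy \<open>j \<in> S\<close> e jS by simp
    next
      case False
      then have "k \<in> S" using k by blast
      then show ?thesis using old(5) \<open>j \<in> S\<close> \<open>j \<noteq> k\<close> e jS False by simp
    qed
  qed
next
  fix i k assume i: "i \<in> {1..n} - (S \<union> T)" and "k \<in> S \<union> T"
  then show "v i (if k \<in> T then Y k else X k) < t i"
    using efx_stateD(6)[OF state] unwanted by (cases "k \<in> T") auto
qed
lemma efx_state_improve_by_envied_set:
  assumes "finite M" and val: "\<forall>i\<in>{1..n}. valuation M (v i)" and state: "efx_state M n v t S X"
    and W: "W \<subseteq> M - \<Union>(X ` S)" "\<exists>j\<in>S. v j (X j) < v j W" "\<forall>i\<in>{1..n} - S. v i W < t i"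
  shows "\<exists>X'. efx_state M n v t S X' \<and> potential M v S X < potential M v S X'"
proof -
  note old = efx_stateD[OF state]
  have "finite W" using W(1) assms(1) finite_subset by blast
  then obtain Z where Z: "Z \<subseteq> W" "\<exists>j\<in>S. v j (X j) < v j Z"
    and minimal: "\<forall>e\<in>Z. \<not> (\<exists>j\<in>S. v j (X j) < v j (Z - {e}))"
    using exists_minimal_subset[of W "\<lambda>Z. \<exists>j\<in>S. v j (X j) < v j Z", OF _ W(2)] by blast
  obtain j0 where j0: "j0 \<in> S" "v j0 (X j0) < v j0 Z" using Z(2) by blast
  have "efx_state M n v t S (X(j0 := Z))"
  proof (rule efx_state_replace_bundle[OF state j0(1) _ j0(2)])
    show "Z \<subseteq> M - \<Union>(X ` S)" using Z(1) W(1) by blast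
    show "\<forall>j\<in>S. \<forall>e\<in>Z. v j (Z - {e}) \<le> v j (X j)" using minimal by (auto simp: not_less)
    show "\<forall>i\<in>{1..n} - S. v i Z < t i"
    proof
      fix i assume i: "i \<in> {1..n} - S"
      have "v i Z \<le> v i W" using valuation_mono[of M "v i" Z W] val i Z(1) W(1) by blast
      moreover have "v i W < t i" using W(3) i by blast
      ultimately show "v i Z < t i" by linarith
    qed
  qed
  moreover have "finite S" using old(1) finite_subset by blast
  then have "potential M v S X < potential M v S (X(j0 := Z))"
    using potential_fun_upd_less[of M S j0 X v Z] assms(1) old(2) j0 by blast
  ultimately show ?thesis by blast
qed

lemma efx_state_residual_partition:
  assumes "rmms_prop M (v a) n (t a)" and state: "efx_state M n v t S X" and a: "a \<in> {1..n} - S"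
  obtains P where "is_partition (M - \<Union>(X ` S)) {1..card ({1..n} - S)} P"
    "\<forall>j\<in>{1..card ({1..n} - S)}. t a \<le> v a (P j)"
proof -
  note old = efx_stateD[OF state]
  have finS: "finite S" using old(1) finite_subset by blast
  have "card S < card {1..n}" using old(1) a by (intro psubset_card_mono) auto
  then have "card S < n" by simp
  moreover have "\<forall>j\<in>S. X j \<subseteq> M \<and> v a (X j) < t a" using old(2,6) a by blast
  moreover have "card ({1..n} - S) = n - card S" using old(1) finS by (simp add: card_Diff_subset)
  ultimately show thesis
    using rmms_prop_residual_partition[OF assms(1) finS _ _ old(3)] that by metis
qed

lemma exists_improved_efx_state:
  assumes "finite M" and val: "\<forall>i\<in>{1..n}. valuation M (v i)"
    and rmms: "\<forall>i\<in>{1..n}. rmms_prop M (v i) n (t i)"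
    and state: "efx_state M n v t S X" and incomplete: "S \<noteq> {1..n}"
  shows "\<exists>S' X'. efx_state M n v t S' X' \<and> potential M v S X < potential M v S' X'"
proof -
  define U where "U = {1..n} - S"
  define R where "R = M - \<Union>(X ` S)"
  have finS: "finite S" using efx_stateD(1)[OF state] finite_subset by blast
  have finU: "finite U" and finR: "finite R" using assms(1) by (simp_all add: U_def R_def)
  obtain a where a: "a \<in> U" using efx_stateD(1)[OF state] incomplete unfolding U_def by blast
  then obtain P where P: "is_partition R {1..card U} P" "\<forall>j\<in>{1..card U}. t a \<le> v a (P j)"
    using efx_state_residual_partition[OF _ state, of a] rmms unfolding U_def R_def by blast
  have "\<forall>j\<in>{1..card U}. \<exists>i\<in>U. t i \<le> v i (P j)" using P(2) a by blast
  then obtain T Y where TU: "T \<subseteq> U" "T \<noteq> {}" and YR: "\<forall>i\<in>T. Y i \<subseteq> R"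
    and Y_disjoint: "\<forall>i\<in>T. \<forall>i'\<in>T. i \<noteq> i' \<longrightarrow> Y i \<inter> Y i' = {}"
    and accepted: "\<forall>i\<in>T. t i \<le> v i (Y i)"
    and unwanted: "\<forall>i'\<in>U - T. \<forall>i\<in>T. v i' (Y i) < t i'"
    and minimal: "\<forall>i'\<in>U. \<forall>i\<in>T. \<forall>e\<in>Y i. v i' (Y i - {e}) < t i'"
    using exists_matched_minimal_bundles[OF finR finU _ P(1)] a by blast
  show ?thesis
  proof (cases "\<exists>j\<in>S. \<exists>i\<in>T. \<exists>e\<in>Y i. v j (X j) < v j (Y i - {e})")
    case True
    then obtain i e where i: "i \<in> T" "e \<in> Y i" and envied: "\<exists>j\<in>S. v j (X j) < v j (Y i - {e})"
      by blast
    have "Y i - {e} \<subseteq> M - \<Union>(X ` S)" using YR i unfolding R_def by blast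
    moreover have "\<forall>i'\<in>{1..n} - S. v i' (Y i - {e}) < t i'" using minimal i unfolding U_def by blast
    ultimately show ?thesis using efx_state_improve_by_envied_set[OF assms(1) val state _ envied] by blast
  next
    case False
    let ?X' = "\<lambda>i. if i \<in> T then Y i else X i"
    have "efx_state M n v t (S \<union> T) ?X'"
    proof (rule efx_state_add_agents[OF state])
      show "T \<subseteq> {1..n} - S" using TU(1) unfolding U_def .
      show "\<forall>i\<in>T. Y i \<subseteq> M - \<Union>(X ` S)" using YR unfolding R_def .
      show "\<forall>i\<in>{1..n} - S - T. \<forall>k\<in>T. v i (Y k) < t i" using unwanted unfolding U_def .
      show "\<forall>i\<in>T. \<forall>k\<in>T. \<forall>e\<in>Y k. v i (Y k - {e}) < t i" using minimal TU(1) by blast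
      show "\<forall>j\<in>S. \<forall>k\<in>T. \<forall>e\<in>Y k. v j (Y k - {e}) \<le> v j (X j)" using False by (auto simp: not_less)
      show "\<forall>i\<in>T. valuation M (v i)" using val TU(1) unfolding U_def by blast
    qed (use Y_disjoint accepted in blast)+
    moreover have "potential M v S X < potential M v (S \<union> T) ?X'"
      using finS finite_subset[OF TU(1) finU] TU by (intro potential_union_less) (auto simp: U_def)
    ultimately show ?thesis by blast
  qed
qed

lemma exists_complete_efx_state:
  assumes "finite M" "\<forall>i\<in>{1..n}. valuation M (v i)" "\<forall>i\<in>{1..n}. rmms_prop M (v i) n (t i)"
  shows "\<exists>X. efx_state M n v t {1..n} X"
proof -
  let ?state = "\<lambda>p. efx_state M n v t (fst p) (snd p)"
  let ?potential = "\<lambda>p. potential M v (fst p) (snd p)"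
  have start: "?state ({}, \<lambda>_. {})" by (simp add: efx_state_empty)
  have bounded: "\<forall>p. ?state p \<longrightarrow> ?potential p < Suc (n * Suc (card (Pow M)))"
  proof (intro allI impI)
    fix p assume "?state p"
    then have "?potential p \<le> n * Suc (card (Pow M))"
      by (rule potential_le[OF assms(1) efx_stateD(1)])
    then show "?potential p < Suc (n * Suc (card (Pow M)))" by simp
  qed
  obtain p where p: "?state p" and max: "\<forall>q. ?state q \<longrightarrow> ?potential q \<le> ?potential p"
    using ex_has_greatest_nat[OF start bounded] by blast
  have "fst p = {1..n}"
  proof (rule ccontr)
    assume "fst p \<noteq> {1..n}"
    then obtain S' X' where "efx_state M n v t S' X'" "?potential p < potential M v S' X'"
      using exists_improved_efx_state[OF assms p] by blast
    then show False using max[rule_format, of "(S', X')"] by simp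
  qed
  then show ?thesis using p by metis
qed

lemma partial_allocation_leftover:
  assumes "\<forall>i\<in>{1..n}. X i \<subseteq> M" "\<forall>i\<in>{1..n}. \<forall>j\<in>{1..n}. i \<noteq> j \<longrightarrow> X i \<inter> X j = {}"
  shows "partial_allocation M n (X(0 := M - \<Union>(X ` {1..n})))"
  unfolding partial_allocation_def is_partition_def
proof
  show "\<forall>i\<in>{0..n}. \<forall>j\<in>{0..n}. i \<noteq> j \<longrightarrow>
      (X(0 := M - \<Union>(X ` {1..n}))) i \<inter> (X(0 := M - \<Union>(X ` {1..n}))) j = {}"
    using assms(2) by auto
  have "{0..n} = insert 0 {1..n}" by auto
  then show "(\<Union>i\<in>{0..n}. (X(0 := M - \<Union>(X ` {1..n}))) i) = M"
    using assms(1) by auto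
qed

theorem mainTheorem6:
  fixes M :: "'a set" and n :: nat and v :: "nat \<Rightarrow> 'a set \<Rightarrow> real"
  assumes "finite M" and "n \<ge> 1"
    and "\<forall>i\<in>{1..n}. valuation M (v i)"
  shows "\<exists>A. partial_allocation M n A \<and>
             (\<forall>i\<in>{1..n}. RMMS M (v i) n \<le> v i (A i)) \<and>
             EFX n v A"
proof -
  define t where "t i = RMMS M (v i) n" for i
  have "\<forall>i\<in>{1..n}. rmms_prop M (v i) n (t i)"
    using rmms_prop_RMMS[OF assms(1) _ assms(2)] assms(3) by (simp add: t_def)
  then obtain X where "efx_state M n v t {1..n} X"
    using exists_complete_efx_state[OF assms(1,3)] by blast
  note X = efx_stateD[OF this]
  let ?A = "X(0 := M - \<Union>(X ` {1..n}))"
  have "partial_allocation M n ?A" using partial_allocation_leftover X(2,3) by blast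
  moreover have "\<forall>i\<in>{1..n}. RMMS M (v i) n \<le> v i (?A i)" using X(4) by (simp add: t_def)
  moreover have "EFX n v ?A" using X(5) by (simp add: EFX_def)
  ultimately show ?thesis by blast
qed

end
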